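(* Let $F$ be a field of characteristic two. If $(A,\sigma)$ is a direct central simple $F$-algebra with orthogonal involution, then $\mathrm{Sym}(A,\sigma)^+$ is a subfield of $A$.
   Context: Involutions are of the first kind. $\mathrm{Alt}(A,\sigma)=\{\sigma(x)-x\mid x\in A\}$, $\mathrm{Sym}(A,\sigma)^+=\{x\in A\mid\sigma(x)=x,\ x^2\in F\}$. $(A,\sigma)$ is called direct if $\sigma(x)x\in\mathrm{Alt}(A,\sigma)$ for $x\in A$ implies $x=0$. *)

theory Defs
  imports Main
begin

text \<open>The algebra A is modelled as the whole carrier of a type 'a :: ring_1.
  The base field F is a subset of A (the image of the structure map), required
  to be a subfield equal to the centre of A.\<close>

definition ring_centre :: "'a::ring_1 set" where
  "ring_centre = {c. \<forall>x. c * x = x * c}"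

definition is_subfield :: "'a::ring_1 set \<Rightarrow> bool" where
  "is_subfield S \<longleftrightarrow> 0 \<in> S \<and> 1 \<in> S \<and> (0::'a) \<noteq> 1 \<and>
     (\<forall>x\<in>S. \<forall>y\<in>S. x + y \<in> S \<and> x - y \<in> S \<and> x * y \<in> S \<and> x * y = y * x) \<and>
     (\<forall>x\<in>S. x \<noteq> 0 \<longrightarrow> (\<exists>y\<in>S. x * y = 1 \<and> y * x = 1))"

definition two_sided_ideal :: "'a::ring_1 set \<Rightarrow> bool" where
  "two_sided_ideal I \<longleftrightarrow> 0 \<in> I \<and> (\<forall>x\<in>I. \<forall>y\<in>I. x + y \<in> I) \<and>
     (\<forall>x\<in>I. \<forall>a. a * x \<in> I \<and> x * a \<in> I)"

definition simple_ring :: "'a::ring_1 itself \<Rightarrow> bool" where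
  "simple_ring _ \<longleftrightarrow> (0::'a) \<noteq> 1 \<and>
     (\<forall>I::'a set. two_sided_ideal I \<longrightarrow> I = {0} \<or> I = UNIV)"

definition fin_dim_over :: "'a::ring_1 set \<Rightarrow> bool" where
  "fin_dim_over F \<longleftrightarrow> (\<exists>B. finite B \<and>
     (\<forall>x. \<exists>c. (\<forall>b\<in>B. c b \<in> F) \<and> x = (\<Sum>b\<in>B. c b * b)))"

definition central_simple_algebra :: "'a::ring_1 set \<Rightarrow> bool" where
  "central_simple_algebra F \<longleftrightarrow> is_subfield F \<and> F = ring_centre \<and>
     simple_ring TYPE('a) \<and> fin_dim_over F"

definition involution_first_kind :: "'a::ring_1 set \<Rightarrow> ('a \<Rightarrow> 'a) \<Rightarrow> bool" where
  "involution_first_kind F \<sigma> \<longleftrightarrow>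
     (\<forall>x y. \<sigma> (x + y) = \<sigma> x + \<sigma> y) \<and>
     (\<forall>x y. \<sigma> (x * y) = \<sigma> y * \<sigma> x) \<and>
     (\<forall>x. \<sigma> (\<sigma> x) = x) \<and>
     (\<forall>c\<in>F. \<sigma> c = c)"

definition Alt :: "('a::ring_1 \<Rightarrow> 'a) \<Rightarrow> 'a set" where
  "Alt \<sigma> = {\<sigma> x - x | x. True}"

definition Sym_plus :: "'a::ring_1 set \<Rightarrow> ('a \<Rightarrow> 'a) \<Rightarrow> 'a set" where
  "Sym_plus F \<sigma> = {x. \<sigma> x = x \<and> x * x \<in> F}"

text \<open>Orthogonal involution in characteristic 2: 1 is not in Alt (KMRT Prop. 2.6).\<close>
definition orthogonal_char2 :: "('a::ring_1 \<Rightarrow> 'a) \<Rightarrow> bool" where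
  "orthogonal_char2 \<sigma> \<longleftrightarrow> (1::'a) \<notin> Alt \<sigma>"

definition direct :: "('a::ring_1 \<Rightarrow> 'a) \<Rightarrow> bool" where
  "direct \<sigma> \<longleftrightarrow> (\<forall>x. \<sigma> x * x \<in> Alt \<sigma> \<longrightarrow> x = 0)"

end

theory Submission
  imports Defs
begin

text \<open>For symmetric x, y with central squares, the anticommutator z = xy + yx is symmetric and,
  in characteristic two, z z = w + \<sigma> w with w = x y x y; so \<sigma> z z is alternating and directness
  forces z = 0. Hence Sym_plus F \<sigma> is commutative; it is then closed under sums and products because
  squaring is additive and multiplicative on commuting elements, and a nonzero x has inverse
  (x x)\<inverse> x, since directness also excludes x x = 0.\<close>

lemma char2_add_self:
  fixes x :: "'a::ring_1"
  assumes "(2::'a) = 0"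
  shows "x + x = 0"
  by (metis assms mult_2 mult_zero_left)

lemma char2_diff_eq_add:
  fixes x y :: "'a::ring_1"
  assumes "(2::'a) = 0"
  shows "x - y = x + y"
  by (metis assms char2_add_self add_eq_0_iff2 diff_conv_add_uminus)

lemma ring_centreD: "c \<in> ring_centre \<Longrightarrow> c * x = x * c"
  unfolding ring_centre_def by blast

lemma Alt_char2:
  fixes \<sigma> :: "'a::ring_1 \<Rightarrow> 'a"
  assumes "(2::'a) = 0"
  shows "\<sigma> w + w \<in> Alt \<sigma>"
proof -
  have "\<sigma> w + w = \<sigma> w - w" using char2_diff_eq_add[OF assms] by simp
  then show ?thesis unfolding Alt_def by blast
qed

lemma involution_first_kind_zero:
  assumes "involution_first_kind F \<sigma>"
  shows "\<sigma> 0 = 0"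
  using assms unfolding involution_first_kind_def by (metis add_cancel_right_right add_0)

lemma direct_norm_eq_zero:
  assumes "direct \<sigma>" and "\<sigma> 0 = 0" and "\<sigma> x * x = 0"
  shows "x = 0"
proof -
  have "\<sigma> x * x \<in> Alt \<sigma>"
    using assms(2,3) unfolding Alt_def by (metis (mono_tags, lifting) diff_self mem_Collect_eq)
  then show ?thesis
    using assms(1) unfolding direct_def by blast
qed

lemma anticommutator_square_char2:
  fixes x y :: "'a::ring_1"
  assumes "(2::'a) = 0" and "x * x \<in> ring_centre" and "y * y \<in> ring_centre"
  shows "(x * y + y * x) * (x * y + y * x) = x * y * (x * y) + y * x * (y * x)"
proof -
  have "x * y * (y * x) = x * (y * y * x)" by (simp add: mult.assoc)
  also have "\<dots> = x * x * (y * y)" using ring_centreD[OF assms(3)] by (simp add: mult.assoc)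
  finally have xyyx: "x * y * (y * x) = x * x * (y * y)" .
  have "y * x * (x * y) = y * (x * x * y)" by (simp add: mult.assoc)
  also have "\<dots> = x * x * (y * y)" using ring_centreD[OF assms(2)] by (metis mult.assoc)
  finally have yxxy: "y * x * (x * y) = x * x * (y * y)" .
  have "(x * y + y * x) * (x * y + y * x)
      = x * y * (x * y) + y * x * (y * x) + (x * y * (y * x) + y * x * (x * y))"
    by (simp add: algebra_simps)
  then show ?thesis
    using xyyx yxxy char2_add_self[OF assms(1)] by simp
qed

lemma Sym_plus_commute:
  fixes F :: "'a::ring_1 set" and \<sigma> :: "'a \<Rightarrow> 'a"
  assumes char2: "(2::'a::ring_1) = 0" and inv: "involution_first_kind F \<sigma>"
    and central: "F \<subseteq> ring_centre" and dir: "direct \<sigma>"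
    and x: "x \<in> Sym_plus F \<sigma>" and y: "y \<in> Sym_plus F \<sigma>"
  shows "x * y = y * x"
proof -
  have add: "\<And>u v. \<sigma> (u + v) = \<sigma> u + \<sigma> v" and mul: "\<And>u v. \<sigma> (u * v) = \<sigma> v * \<sigma> u"
    using inv unfolding involution_first_kind_def by auto
  have sx: "\<sigma> x = x" and sy: "\<sigma> y = y" and "x * x \<in> ring_centre" and "y * y \<in> ring_centre"
    using x y central unfolding Sym_plus_def by auto
  define z where "z = x * y + y * x"
  have "\<sigma> z = z" unfolding z_def using add mul sx sy by (simp add: add.commute)
  moreover have "z * z = \<sigma> (x * y * (x * y)) + x * y * (x * y)"
    unfolding z_def
    using anticommutator_square_char2[OF char2 \<open>x * x \<in> _\<close> \<open>y * y \<in> _\<close>] mul sx sy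
    by (simp add: add.commute mult.assoc)
  ultimately have "\<sigma> z * z \<in> Alt \<sigma>" using Alt_char2[OF char2] by simp
  then have "z = 0" using dir unfolding direct_def by blast
  then show ?thesis
    unfolding z_def using char2_diff_eq_add[OF char2, of "x * y" "y * x"] by simp
qed

lemma Sym_plus_add:
  fixes F :: "'a::ring_1 set" and \<sigma> :: "'a \<Rightarrow> 'a"
  assumes "(2::'a::ring_1) = 0" and "involution_first_kind F \<sigma>" and "is_subfield F"
    and "x \<in> Sym_plus F \<sigma>" and "y \<in> Sym_plus F \<sigma>" and "x * y = y * x"
  shows "x + y \<in> Sym_plus F \<sigma>"
proof -
  have "(x + y) * (x + y) = x * x + y * y + (x * y + x * y)"
    using assms(6) by (simp add: algebra_simps)
  then have "(x + y) * (x + y) = x * x + y * y"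
    using char2_add_self[OF assms(1), of "x * y"] by simp
  then show ?thesis
    using assms(2-5) unfolding Sym_plus_def involution_first_kind_def is_subfield_def by simp
qed

lemma Sym_plus_mult:
  fixes F :: "'a::ring_1 set" and \<sigma> :: "'a \<Rightarrow> 'a"
  assumes "involution_first_kind F \<sigma>" and "is_subfield F"
    and "x \<in> Sym_plus F \<sigma>" and "y \<in> Sym_plus F \<sigma>" and "x * y = y * x"
  shows "x * y \<in> Sym_plus F \<sigma>"
proof -
  have "(x * y) * (x * y) = (x * x) * (y * y)"
    by (metis assms(5) mult.assoc)
  then show ?thesis
    using assms unfolding Sym_plus_def involution_first_kind_def is_subfield_def by simp
qed

lemma Sym_plus_inverse:
  fixes F :: "'a::ring_1 set" and \<sigma> :: "'a \<Rightarrow> 'a"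
  assumes inv: "involution_first_kind F \<sigma>" and field: "is_subfield F"
    and central: "F \<subseteq> ring_centre" and dir: "direct \<sigma>"
    and x: "x \<in> Sym_plus F \<sigma>" and "x \<noteq> 0"
  shows "\<exists>y\<in>Sym_plus F \<sigma>. x * y = 1 \<and> y * x = 1"
proof -
  have sx: "\<sigma> x = x" and "x * x \<in> F" using x unfolding Sym_plus_def by auto
  have "x * x \<noteq> 0"
    using direct_norm_eq_zero[OF dir involution_first_kind_zero[OF inv]] sx \<open>x \<noteq> 0\<close> by metis
  then obtain c where "c \<in> F" and c1: "x * x * c = 1" and c2: "c * (x * x) = 1"
    using field \<open>x * x \<in> F\<close> unfolding is_subfield_def by blast
  have cx: "\<And>u. c * u = u * c" using central \<open>c \<in> F\<close> ring_centreD by blast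
  have "\<sigma> c = c" using inv \<open>c \<in> F\<close> unfolding involution_first_kind_def by blast
  define y where "y = c * x"
  have "x * y = 1" unfolding y_def using c1 cx by (metis mult.assoc)
  moreover have "y * x = 1" unfolding y_def using c2 by (simp add: mult.assoc)
  moreover have "\<sigma> y = y"
    unfolding y_def using inv \<open>\<sigma> c = c\<close> sx cx unfolding involution_first_kind_def by simp
  moreover have "y * y = c"
  proof -
    have "y * y = c * (c * (x * x))" unfolding y_def using cx by (metis mult.assoc)
    also have "\<dots> = c" using c2 by (simp add: mult.assoc[symmetric])
    finally show ?thesis .
  qed
  ultimately show ?thesis using \<open>c \<in> F\<close> unfolding Sym_plus_def by auto
qed

theorem proposition3p4:
  fixes F :: "'a::ring_1 set" and \<sigma> :: "'a \<Rightarrow> 'a"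
  assumes "central_simple_algebra F"
    and "(2::'a) = 0"
    and "involution_first_kind F \<sigma>"
    and "orthogonal_char2 \<sigma>"
    and "direct \<sigma>"
  shows "is_subfield (Sym_plus F \<sigma>)"
proof -
  have field: "is_subfield F" and central: "F \<subseteq> ring_centre"
    using assms(1) unfolding central_simple_algebra_def by auto
  have comm: "\<And>x y. x \<in> Sym_plus F \<sigma> \<Longrightarrow> y \<in> Sym_plus F \<sigma> \<Longrightarrow> x * y = y * x"
    using Sym_plus_commute[OF assms(2,3) central assms(5)] by blast
  show ?thesis
    unfolding is_subfield_def
  proof (intro conjI ballI impI)
    show "0 \<in> Sym_plus F \<sigma>" and "1 \<in> Sym_plus F \<sigma>" and "(0::'a) \<noteq> 1"
      using field involution_first_kind_zero[OF assms(3)] assms(3)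
      unfolding Sym_plus_def is_subfield_def involution_first_kind_def by auto
  next
    fix x y assume x: "x \<in> Sym_plus F \<sigma>" and y: "y \<in> Sym_plus F \<sigma>"
    show "x * y = y * x" using comm[OF x y] .
    show "x + y \<in> Sym_plus F \<sigma>" using Sym_plus_add[OF assms(2,3) field x y comm[OF x y]] .
    then show "x - y \<in> Sym_plus F \<sigma>" unfolding char2_diff_eq_add[OF assms(2)] .
    show "x * y \<in> Sym_plus F \<sigma>" using Sym_plus_mult[OF assms(3) field x y comm[OF x y]] .
  next
    show "\<And>x. x \<in> Sym_plus F \<sigma> \<Longrightarrow> x \<noteq> 0 \<Longrightarrow> \<exists>y\<in>Sym_plus F \<sigma>. x * y = 1 \<and> y * x = 1"
      using Sym_plus_inverse[OF assms(3) field central assms(5)] .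
  qed
qed

end
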